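(* Let $n\ge 3$ and let $G$ be a labeled star graph $K_{1,n-1}$ with vertex set $[n]$. Then $X(G;\mathbf{x},q)$ is palindromic if and only if $n$ is odd and the central vertex (the unique vertex of degree greater than $1$) is labeled $\frac{n+1}{2}$.
   Context: A labeled graph is a finite simple graph with vertex set $[n]$. A proper coloring is $c\colon[n]\to\{1,2,\dots\}$ with adjacent vertices colored differently; $\operatorname{asc}(c)=\#\{ij\in E: i<j,\ c(i)<c(j)\}$. The CQF is $X(G;\mathbf{x},q)=\sum_{c \text{ proper}} x_{c(1)}\cdots x_{c(n)}q^{\operatorname{asc}(c)}$. It is palindromic if, with $m=|E|$, the coefficient of $q^k$ (a quasisymmetric function) equals the coefficient of $q^{m-k}$ for every $k$. *)

theory Defs
  imports "HOL-Library.FuncSet"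
begin

definition labeled_graph :: "nat \<Rightarrow> nat set set \<Rightarrow> bool" where
  "labeled_graph n E \<longleftrightarrow> (\<forall>e\<in>E. e \<subseteq> {1..n} \<and> card e = 2)"

definition proper_colorings :: "nat \<Rightarrow> nat set set \<Rightarrow> (nat \<Rightarrow> nat) set" where
  "proper_colorings n E =
     {c \<in> {1..n} \<rightarrow>\<^sub>E {1..}. \<forall>e\<in>E. \<forall>i\<in>e. \<forall>j\<in>e. i \<noteq> j \<longrightarrow> c i \<noteq> c j}"

definition asc :: "nat set set \<Rightarrow> (nat \<Rightarrow> nat) \<Rightarrow> nat" where
  "asc E c = card {e\<in>E. \<exists>i j. e = {i, j} \<and> i < j \<and> c i < c j}"

text \<open>Coefficient of q^k x^alpha in X(G;x,q), where x^alpha = prod_j x_j^(alpha j):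
  the number of proper colorings with k ascents and content alpha.\<close>
definition cqf_coeff :: "nat \<Rightarrow> nat set set \<Rightarrow> nat \<Rightarrow> (nat \<Rightarrow> nat) \<Rightarrow> nat" where
  "cqf_coeff n E k \<alpha> =
     card {c \<in> proper_colorings n E. asc E c = k \<and> (\<forall>j. card {i\<in>{1..n}. c i = j} = \<alpha> j)}"

text \<open>Palindromicity: the coefficient of q^k equals that of q^(m-k), m = |E|, for 0 \<le> k \<le> m,
  as formal power series in x_1, x_2, ... (i.e. coefficientwise in every monomial).\<close>
definition cqf_palindromic :: "nat \<Rightarrow> nat set set \<Rightarrow> bool" where
  "cqf_palindromic n E \<longleftrightarrow>
     (\<forall>k\<le>card E. \<forall>\<alpha>. cqf_coeff n E k \<alpha> = cqf_coeff n E (card E - k) \<alpha>)"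

definition star_graph :: "nat \<Rightarrow> nat \<Rightarrow> nat set set" where
  "star_graph n v = {{v, u} | u. u \<in> {1..n} \<and> u \<noteq> v}"

end

theory Submission
  imports Defs
begin

text \<open>For the star with centre v, an edge {v,u} is an ascent of c exactly when the leaf u lies
  on the same side of v in the labelling as c u does of c v. If v is the middle label
  (2v = n + 1), precomposing a coloring with the reversal u \<mapsto> n + 1 - u fixes v, preserves
  properness and content, and turns ascents into descents; this involution matches the
  colorings with k and with n - 1 - k ascents. Conversely, for content (1, n - 1) the only
  proper coloring gives colour 1 to the centre, and it has exactly n - v ascents, so
  palindromicity forces n - v = v - 1.\<close>

lemma star_graph_eq_image: "star_graph n v = (\<lambda>u. {v, u}) ` ({1..n} - {v})"
  unfolding star_graph_def by auto

lemma inj_on_star_edge: "inj_on (\<lambda>u. {v, u}) A"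
  by (auto simp: inj_on_def doubleton_eq_iff)

lemma card_star_graph:
  assumes "v \<in> {1..n}"
  shows "card (star_graph n v) = n - 1"
  using assms by (simp add: star_graph_eq_image card_image inj_on_star_edge)

lemma proper_colorings_star_graph_iff:
  "c \<in> proper_colorings n (star_graph n v) \<longleftrightarrow>
    c \<in> {1..n} \<rightarrow>\<^sub>E {1..} \<and> (\<forall>u\<in>{1..n}. u \<noteq> v \<longrightarrow> c u \<noteq> c v)"
  unfolding proper_colorings_def star_graph_eq_image by fastforce

definition star_ascents :: "nat \<Rightarrow> nat \<Rightarrow> (nat \<Rightarrow> nat) \<Rightarrow> nat set" where
  "star_ascents n v c = {u \<in> {1..n} - {v}. u < v \<and> c u < c v \<or> v < u \<and> c v < c u}"

lemma star_edge_ascent_iff: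
  "(\<exists>i j. {v, u} = {i, j} \<and> i < j \<and> c i < c j) \<longleftrightarrow>
    u < v \<and> c u < c v \<or> v < u \<and> c v < c u"
  by (auto simp: doubleton_eq_iff)

lemma asc_star_graph: "asc (star_graph n v) c = card (star_ascents n v c)"
proof -
  have "{e \<in> star_graph n v. \<exists>i j. e = {i, j} \<and> i < j \<and> c i < c j}
        = (\<lambda>u. {v, u}) ` star_ascents n v c"
    unfolding star_graph_eq_image star_ascents_def
    using star_edge_ascent_iff[of v _ c] by blast
  then show ?thesis
    unfolding asc_def by (simp add: card_image inj_on_star_edge)
qed

lemma card_reflect_atLeastAtMost:
  "card {u \<in> {1..n}. P (n + 1 - u)} = card {u \<in> {1..n::nat}. P u}"
  by (rule bij_betw_same_card[of "\<lambda>u. n + 1 - u"],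
      rule bij_betw_byWitness[where f'="\<lambda>u. n + 1 - u"]) auto

definition reflect_coloring :: "nat \<Rightarrow> (nat \<Rightarrow> nat) \<Rightarrow> nat \<Rightarrow> nat" where
  "reflect_coloring n c = restrict (\<lambda>i. c (n + 1 - i)) {1..n}"

lemma reflect_coloring_involutive:
  assumes "c \<in> {1..n} \<rightarrow>\<^sub>E A"
  shows "reflect_coloring n (reflect_coloring n c) = c"
proof
  fix i show "reflect_coloring n (reflect_coloring n c) i = c i"
    using assms by (cases "i \<in> {1..n}") (auto simp: reflect_coloring_def PiE_iff extensional_def)
qed

lemma reflect_coloring_content:
  "card {i \<in> {1..n}. reflect_coloring n c i = j} = card {i \<in> {1..n}. c i = j}"
proof -
  have "{i \<in> {1..n}. reflect_coloring n c i = j} = {i \<in> {1..n}. c (n + 1 - i) = j}"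
    by (auto simp: reflect_coloring_def)
  then show ?thesis
    using card_reflect_atLeastAtMost[of n "\<lambda>w. c w = j"] by simp
qed

lemma reflect_coloring_proper:
  assumes "2 * v = n + 1" and "c \<in> proper_colorings n (star_graph n v)"
  shows "reflect_coloring n c \<in> proper_colorings n (star_graph n v)"
proof -
  have c: "c \<in> {1..n} \<rightarrow>\<^sub>E {1..}" "\<forall>u\<in>{1..n}. u \<noteq> v \<longrightarrow> c u \<noteq> c v"
    using assms(2) unfolding proper_colorings_star_graph_iff by auto
  have "reflect_coloring n c \<in> {1..n} \<rightarrow>\<^sub>E {1..}"
  proof
    fix i assume "i \<in> {1..n}"
    then have "n + 1 - i \<in> {1..n}"
      by auto
    then show "reflect_coloring n c i \<in> {1..}"
      using c(1) \<open>i \<in> {1..n}\<close> by (auto simp: reflect_coloring_def PiE_iff)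
  qed (auto simp: reflect_coloring_def)
  moreover have "reflect_coloring n c u \<noteq> reflect_coloring n c v"
    if "u \<in> {1..n}" "u \<noteq> v" for u
  proof -
    have "n + 1 - u \<in> {1..n}" "n + 1 - u \<noteq> v" "n + 1 - v = v" "v \<in> {1..n}"
      using that assms(1) by auto
    then show ?thesis
      using c(2) that(1) by (auto simp: reflect_coloring_def)
  qed
  ultimately show ?thesis
    unfolding proper_colorings_star_graph_iff by blast
qed

lemma star_ascents_reflect_coloring:
  assumes "2 * v = n + 1" and "c \<in> proper_colorings n (star_graph n v)"
  shows "star_ascents n v (reflect_coloring n c)
         = (\<lambda>u. n + 1 - u) ` ({1..n} - {v} - star_ascents n v c)"
proof -
  have proper: "c u \<noteq> c v" if "u \<in> {1..n} - {v}" for u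
    using assms(2) that unfolding proper_colorings_star_graph_iff by blast
  have "n + 1 - v = v" "v \<in> {1..n}"
    using assms(1) by auto
  then have v: "reflect_coloring n c v = c v" "n + 1 - v = v"
    by (simp_all add: reflect_coloring_def)
  show ?thesis
  proof (intro equalityI subsetI)
    fix u assume "u \<in> star_ascents n v (reflect_coloring n c)"
    then have "n + 1 - u \<in> {1..n} - {v} - star_ascents n v c" "u = n + 1 - (n + 1 - u)"
      using assms(1) v by (auto simp: star_ascents_def reflect_coloring_def)
    then show "u \<in> (\<lambda>u. n + 1 - u) ` ({1..n} - {v} - star_ascents n v c)"
      by blast
  next
    fix u assume "u \<in> (\<lambda>u. n + 1 - u) ` ({1..n} - {v} - star_ascents n v c)"
    then obtain w where u: "u = n + 1 - w" and w: "w \<in> {1..n} - {v}" "w \<notin> star_ascents n v c"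
      by blast
    have "c w \<noteq> c v"
      using proper w(1) by blast
    then show "u \<in> star_ascents n v (reflect_coloring n c)"
      using u w assms(1) v by (auto simp: star_ascents_def reflect_coloring_def)
  qed
qed

lemma asc_reflect_coloring:
  assumes "2 * v = n + 1" and "c \<in> proper_colorings n (star_graph n v)"
  shows "asc (star_graph n v) (reflect_coloring n c) = n - 1 - asc (star_graph n v) c"
proof -
  have "inj_on (\<lambda>u. n + 1 - u) ({1..n} - {v} - star_ascents n v c)"
    by (auto simp: inj_on_def)
  moreover have "card ({1..n} - {v} - star_ascents n v c) = n - 1 - card (star_ascents n v c)"
  proof -
    have "star_ascents n v c \<subseteq> {1..n} - {v}" "v \<in> {1..n}"
      using assms(1) by (auto simp: star_ascents_def)
    then show ?thesis
      by (subst card_Diff_subset) (auto intro: finite_subset)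
  qed
  ultimately show ?thesis
    unfolding asc_star_graph star_ascents_reflect_coloring[OF assms]
    by (simp add: card_image)
qed

lemma cqf_palindromic_star_graph_if_middle:
  assumes "2 * v = n + 1"
  shows "cqf_palindromic n (star_graph n v)"
  unfolding cqf_palindromic_def
proof (intro allI impI)
  let ?E = "star_graph n v"
  fix k \<alpha> assume k: "k \<le> card ?E"
  define C where "C k = {c \<in> proper_colorings n ?E. asc ?E c = k \<and>
                           (\<forall>j. card {i \<in> {1..n}. c i = j} = \<alpha> j)}" for k
  have card_E: "card ?E = n - 1"
    using assms by (intro card_star_graph) auto
  have maps_to: "reflect_coloring n ` C k' \<subseteq> C (card ?E - k')" for k'
  proof
    fix d assume "d \<in> reflect_coloring n ` C k'"
    then obtain c where d: "d = reflect_coloring n c" and c: "c \<in> C k'"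
      by blast
    then show "d \<in> C (card ?E - k')"
      using reflect_coloring_proper[OF assms] asc_reflect_coloring[OF assms]
        reflect_coloring_content[of n c]
      unfolding C_def card_E by auto
  qed
  have involutive: "reflect_coloring n (reflect_coloring n c) = c" if "c \<in> C k'" for c k'
    using that by (auto simp: C_def proper_colorings_def reflect_coloring_involutive)
  have "bij_betw (reflect_coloring n) (C k) (C (card ?E - k))"
    using maps_to[of k] maps_to[of "card ?E - k"] k involutive
    by (intro bij_betw_byWitness[where f'="reflect_coloring n"]) auto
  then show "cqf_coeff n ?E k \<alpha> = cqf_coeff n ?E (card ?E - k) \<alpha>"
    unfolding cqf_coeff_def C_def by (rule bij_betw_same_card)
qed

definition center_coloring :: "nat \<Rightarrow> nat \<Rightarrow> nat \<Rightarrow> nat" where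
  "center_coloring n v = restrict (\<lambda>i. if i = v then 1 else 2) {1..n}"

definition center_content :: "nat \<Rightarrow> nat \<Rightarrow> nat" where
  "center_content n j = (if j = 1 then 1 else if j = 2 then n - 1 else 0)"

lemma center_coloring_proper:
  assumes "v \<in> {1..n}"
  shows "center_coloring n v \<in> proper_colorings n (star_graph n v)"
  using assms unfolding proper_colorings_star_graph_iff by (auto simp: center_coloring_def)

lemma center_coloring_content:
  assumes "v \<in> {1..n}"
  shows "card {i \<in> {1..n}. center_coloring n v i = j} = center_content n j"
proof -
  have "{i \<in> {1..n}. center_coloring n v i = j} =
        (if j = 1 then {v} else if j = 2 then {1..n} - {v} else {})"
    using assms by (auto simp: center_coloring_def)
  then show ?thesis
    using assms by (simp add: center_content_def)
qed

lemma asc_center_coloring: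
  assumes "v \<in> {1..n}"
  shows "asc (star_graph n v) (center_coloring n v) = n - v"
proof -
  have "star_ascents n v (center_coloring n v) = {v<..n}"
    using assms by (auto simp: star_ascents_def center_coloring_def)
  then show ?thesis
    by (simp add: asc_star_graph)
qed

text \<open>For n = 2 the coloring with leaf colour 1 and centre colour 2 has the same content,
  which is why n \<ge> 3 is needed.\<close>

lemma center_coloring_unique:
  assumes "n \<ge> 3" and "v \<in> {1..n}" and "c \<in> proper_colorings n (star_graph n v)"
    and content: "\<forall>j. card {i \<in> {1..n}. c i = j} = center_content n j"
  shows "c = center_coloring n v"
proof -
  define S where "S j = {i \<in> {1..n}. c i = j}" for j
  have card_S1: "card (S 1) = 1" and card_S2: "card (S 2) = n - 1"
    using content unfolding S_def center_content_def by (metis, simp)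
  have c: "c \<in> {1..n} \<rightarrow>\<^sub>E {1..}" "\<forall>u\<in>{1..n}. u \<noteq> v \<longrightarrow> c u \<noteq> c v"
    using assms(3) unfolding proper_colorings_star_graph_iff by auto
  have "card (S 1 \<union> S 2) = card {1..n}"
    using card_S1 card_S2 assms(1) by (subst card_Un_disjoint) (auto simp: S_def)
  then have "S 1 \<union> S 2 = {1..n}"
    by (intro card_subset_eq) (auto simp: S_def)
  then have one_or_two: "c i = 1 \<or> c i = 2" if "i \<in> {1..n}" for i
    using that unfolding S_def by blast
  have center: "c v = 1"
  proof (rule ccontr)
    assume "c v \<noteq> 1"
    then have "c v = 2"
      using one_or_two assms(2) by blast
    then have "{1..n} - {v} \<subseteq> S 1"
      using one_or_two c(2) unfolding S_def by fastforce
    then have "card ({1..n} - {v}) \<le> card (S 1)"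
      by (intro card_mono) (auto simp: S_def)
    then show False
      using card_S1 assms(1,2) by simp
  qed
  show ?thesis
  proof
    fix i show "c i = center_coloring n v i"
    proof (cases "i \<in> {1..n}")
      case True
      then show ?thesis
        using center one_or_two[of i] c(2) by (auto simp: center_coloring_def)
    next
      case False
      then show ?thesis
        using c(1) by (auto simp: center_coloring_def PiE_iff extensional_def)
    qed
  qed
qed

lemma cqf_coeff_center_content:
  assumes "n \<ge> 3" and "v \<in> {1..n}"
  shows "cqf_coeff n (star_graph n v) k (center_content n) = (if k = n - v then 1 else 0)"
proof -
  let ?E = "star_graph n v"
  define C where "C = {c \<in> proper_colorings n ?E. asc ?E c = k \<and>
                         (\<forall>j. card {i \<in> {1..n}. c i = j} = center_content n j)}"
  have "C \<subseteq> {center_coloring n v}"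
    using center_coloring_unique[OF assms] unfolding C_def by blast
  moreover have "center_coloring n v \<in> C \<longleftrightarrow> k = n - v"
    using center_coloring_proper[OF assms(2)] center_coloring_content[OF assms(2)]
      asc_center_coloring[OF assms(2)]
    unfolding C_def by auto
  ultimately have "C = (if k = n - v then {center_coloring n v} else {})"
    by auto
  then show ?thesis
    unfolding cqf_coeff_def C_def[symmetric] by simp
qed

lemma middle_if_cqf_palindromic_star_graph:
  assumes "n \<ge> 3" and "v \<in> {1..n}" and "cqf_palindromic n (star_graph n v)"
  shows "2 * v = n + 1"
proof -
  let ?coeff = "\<lambda>k. cqf_coeff n (star_graph n v) k (center_content n)"
  have card_E: "card (star_graph n v) = n - 1"
    using assms(2) by (rule card_star_graph)
  have "v - 1 \<le> card (star_graph n v)" "card (star_graph n v) - (v - 1) = n - v"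
    using assms(2) card_E by auto
  then have "?coeff (v - 1) = ?coeff (n - v)"
    using assms(3) unfolding cqf_palindromic_def by metis
  also have "\<dots> = 1"
    using cqf_coeff_center_content[OF assms(1,2)] by simp
  finally have "v - 1 = n - v"
    using cqf_coeff_center_content[OF assms(1,2), of "v - 1"] by (cases "v - 1 = n - v") simp_all
  then show ?thesis
    using assms(2) by auto
qed

theorem proposition5p1:
  fixes n v :: nat
  assumes "n \<ge> 3" and "v \<in> {1..n}"
  shows "cqf_palindromic n (star_graph n v) \<longleftrightarrow> odd n \<and> v = (n + 1) div 2"
proof -
  have "odd n \<and> v = (n + 1) div 2 \<longleftrightarrow> 2 * v = n + 1"
    by presburger
  then show ?thesis
    using middle_if_cqf_palindromic_star_graph[OF assms] cqf_palindromic_star_graph_if_middle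
    by blast
qed

end
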